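(* Let $G$ be an $n$-node network graph and let $T$ be an HST constructed on top of $G$ by the randomized algorithm of Fakcharoenphol, Rao and Talwar. Let $R$ be a dynamic set of queueing requests issued at the nodes of $G$ (each request at node $v$ viewed as issued at the leaf of $T$ corresponding to $v$), and assume the sequence of requests is independent of the randomness of the HST construction. Then $\mathbb{E}[\mathrm{OPT}_T(R)]\le O(\log n)\cdot \mathrm{OPT}_G(R)$.
   Context: The Fakcharoenphol–Rao–Talwar (FRT) randomized construction maps the nodes of $G$ bijectively to the leaves of an HST $T$ such that for all nodes $x,y$: $d_G(x,y)\le d_T(x,y)$ and $\mathbb{E}[d_T(x,y)]=O(\log n)\cdot d_G(x,y)$. A request is $r=(v,t)$ (node $v$, time $t\ge0$), with a dummy request $r_0=(v_0,0)$ ordered first. For a weighted graph $H$, $\mathrm{OPT}_H(R)=\min_\pi\sum_{i=1}^{|R|-1}\max\{d_H(v_{\pi(i-1)},v_{\pi(i)}),\,t_{\pi(i-1)}-t_{\pi(i)}\}$, minimum over orderings $\pi$ of $R$ with $\pi(0)=0$. *)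

theory Defs
  imports "HOL-Probability.Probability" "HOL-Combinatorics.Permutations"
begin

text \<open>A request is a pair (node, time). A request sequence is a list whose
  0-th entry is the dummy request (v0, 0).\<close>
type_synonym 'a request = "'a \<times> real"

definition valid_requests :: "'a set \<Rightarrow> 'a request list \<Rightarrow> bool" where
  "valid_requests V rs \<longleftrightarrow> rs \<noteq> [] \<and> snd (rs ! 0) = 0 \<and>
     (\<forall>r\<in>set rs. fst r \<in> V \<and> snd r \<ge> 0)"

definition order_cost :: "('a \<Rightarrow> 'a \<Rightarrow> real) \<Rightarrow> 'a request list \<Rightarrow> (nat \<Rightarrow> nat) \<Rightarrow> real" where
  "order_cost d rs \<sigma> = (\<Sum>i\<in>{1..<length rs}.
      max (d (fst (rs ! \<sigma> (i - 1))) (fst (rs ! \<sigma> i)))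
          (snd (rs ! \<sigma> (i - 1)) - snd (rs ! \<sigma> i)))"

definition OPT :: "('a \<Rightarrow> 'a \<Rightarrow> real) \<Rightarrow> 'a request list \<Rightarrow> real" where
  "OPT d rs = Min (order_cost d rs ` {\<sigma>. \<sigma> permutes {..<length rs} \<and> \<sigma> 0 = 0})"

definition metric_on :: "'a set \<Rightarrow> ('a \<Rightarrow> 'a \<Rightarrow> real) \<Rightarrow> bool" where
  "metric_on V d \<longleftrightarrow> (\<forall>x\<in>V. \<forall>y\<in>V. d x y \<ge> 0 \<and> (d x y = 0 \<longleftrightarrow> x = y) \<and> d x y = d y x) \<and>
     (\<forall>x\<in>V. \<forall>y\<in>V. \<forall>z\<in>V. d x z \<le> d x y + d y z)"

text \<open>The FRT guarantees (with constant c) for a random HST, represented by the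
  distribution of the induced leaf metric d_T on the nodes V (leaves of T are
  identified with the nodes of G): domination in every outcome and expected
  stretch at most c * log n.\<close>
definition FRT_guarantee :: "real \<Rightarrow> 'a set \<Rightarrow> ('a \<Rightarrow> 'a \<Rightarrow> real) \<Rightarrow> ('a \<Rightarrow> 'a \<Rightarrow> real) pmf \<Rightarrow> bool" where
  "FRT_guarantee c V dG T \<longleftrightarrow>
     (\<forall>dT\<in>set_pmf T. \<forall>x\<in>V. \<forall>y\<in>V. dG x y \<le> dT x y) \<and>
     (\<forall>x\<in>V. \<forall>y\<in>V. (\<integral>\<^sup>+ dT. ennreal (dT x y) \<partial>measure_pmf T)
                     \<le> ennreal (c * ln (real (card V)) * dG x y))"

end

theory Submission
  imports Defs
begin

text \<open>Fix an ordering \<sigma> that is optimal for d_G. As d_T is nonnegative,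
  max (d_T a b) D \<le> d_T a b + max (d_G a b) D termwise, so the cost of \<sigma> in T
  is at most its pure travel length in T plus OPT_G. The travel length is linear
  in the metric, so its expectation is at most c ln n times the travel length in
  G, which is at most OPT_G. Hence E[OPT_T] \<le> (c ln n + 1) OPT_G. For n \<ge> 2 the
  additive 1 is absorbed since ln n \<ge> ln 2; for n = 1 both sides vanish, as
  serving the requests in order of issue time costs nothing.\<close>

definition order_dist :: "('a \<Rightarrow> 'a \<Rightarrow> real) \<Rightarrow> 'a request list \<Rightarrow> (nat \<Rightarrow> nat) \<Rightarrow> real" where
  "order_dist d rs \<sigma> = (\<Sum>i\<in>{1..<length rs}. d (fst (rs ! \<sigma> (i - 1))) (fst (rs ! \<sigma> i)))"

lemma permutes_consecutive_nodes:
  assumes "\<sigma> permutes {..<length rs}" and "fst ` set rs \<subseteq> V" and "i \<in> {1..<length rs}"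
  shows "fst (rs ! \<sigma> (i - 1)) \<in> V" and "fst (rs ! \<sigma> i) \<in> V"
proof -
  have "rs ! \<sigma> j \<in> set rs" if "j < length rs" for j
    using assms(1) that by (metis lessThan_iff nth_mem permutes_in_image)
  then show "fst (rs ! \<sigma> (i - 1)) \<in> V" and "fst (rs ! \<sigma> i) \<in> V"
    using assms(2,3) by auto
qed

lemma exists_sorting_permutation_fixing_0:
  fixes f :: "nat \<Rightarrow> 'b::linorder"
  assumes "0 < n" and f0_min: "\<forall>i<n. f 0 \<le> f i"
  shows "\<exists>\<sigma>. \<sigma> permutes {..<n} \<and> \<sigma> 0 = 0 \<and> (\<forall>i\<in>{1..<n}. f (\<sigma> (i - 1)) \<le> f (\<sigma> i))"
proof -
  define ys where "ys = 0 # sort_key f [1..<n]"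
  define \<sigma> where "\<sigma> = (\<lambda>i. if i < n then ys ! i else i)"
  have len: "length ys = n" and set: "set ys = {..<n}"
    using \<open>0 < n\<close> by (auto simp: ys_def length_sort)
  have "bij_betw ((!) ys) {..<n} {..<n}"
    using bij_betw_nth[of ys] len set by (simp add: ys_def distinct_sort)
  then have "bij_betw \<sigma> {..<n} {..<n}"
    by (rule bij_betw_cong[THEN iffD1, rotated]) (simp add: \<sigma>_def)
  then have perm: "\<sigma> permutes {..<n}"
    by (rule bij_imp_permutes) (simp add: \<sigma>_def)
  have "sorted (map f ys)"
    using f0_min by (auto simp: ys_def)
  then have "f (\<sigma> (i - 1)) \<le> f (\<sigma> i)" if "i \<in> {1..<n}" for i
    using that sorted_nth_mono[of "map f ys" "i - 1" i] len by (auto simp: \<sigma>_def)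
  moreover have "\<sigma> 0 = 0"
    using \<open>0 < n\<close> by (simp add: \<sigma>_def ys_def)
  ultimately show ?thesis
    using perm by blast
qed

lemma finite_orderings: "finite {\<sigma>. \<sigma> permutes {..<length rs} \<and> \<sigma> 0 = (0::nat)}"
  by (rule finite_subset[OF _ finite_permutations[of "{..<length rs}"]]) auto

lemma OPT_le_order_cost:
  assumes "\<sigma> permutes {..<length rs}" and "\<sigma> 0 = 0"
  shows "OPT d rs \<le> order_cost d rs \<sigma>"
  unfolding OPT_def using finite_orderings[of rs] assms by (intro Min_le) auto

lemma OPT_attained:
  obtains \<sigma> where "\<sigma> permutes {..<length rs}" and "\<sigma> 0 = 0" and "OPT d rs = order_cost d rs \<sigma>"
proof -
  have "id \<in> {\<sigma>. \<sigma> permutes {..<length rs} \<and> \<sigma> 0 = 0}"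
    by (simp add: permutes_id)
  then have "OPT d rs \<in> order_cost d rs ` {\<sigma>. \<sigma> permutes {..<length rs} \<and> \<sigma> 0 = 0}"
    unfolding OPT_def by (intro Min_in finite_imageI finite_orderings) blast
  then show thesis
    using that by auto
qed

lemma order_dist_le_order_cost: "order_dist d rs \<sigma> \<le> order_cost d rs \<sigma>"
  unfolding order_dist_def order_cost_def by (intro sum_mono) simp

lemma order_dist_nonneg:
  assumes "\<forall>x\<in>V. \<forall>y\<in>V. 0 \<le> d x y" and "fst ` set rs \<subseteq> V" and "\<sigma> permutes {..<length rs}"
  shows "0 \<le> order_dist d rs \<sigma>"
  unfolding order_dist_def
  using assms(1) permutes_consecutive_nodes[OF assms(3,2)] by (intro sum_nonneg) blast

lemma OPT_nonneg:
  assumes "\<forall>x\<in>V. \<forall>y\<in>V. 0 \<le> d x y" and "fst ` set rs \<subseteq> V"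
  shows "0 \<le> OPT d rs"
proof -
  obtain \<sigma> where "\<sigma> permutes {..<length rs}" and "OPT d rs = order_cost d rs \<sigma>"
    by (rule OPT_attained)
  then show ?thesis
    using order_dist_nonneg[OF assms] order_dist_le_order_cost by (metis order_trans)
qed

lemma OPT_single_node:
  assumes "valid_requests {v} rs" and "d v v = 0"
  shows "OPT d rs = 0"
proof -
  have nodes: "fst ` set rs \<subseteq> {v}" and "rs \<noteq> []"
    using assms(1) by (auto simp: valid_requests_def)
  have "\<forall>i<length rs. snd (rs ! 0) \<le> snd (rs ! i)"
    using assms(1) by (auto simp: valid_requests_def)
  then obtain \<sigma> where perm: "\<sigma> permutes {..<length rs}" and "\<sigma> 0 = 0"
    and sorted: "\<forall>i\<in>{1..<length rs}. snd (rs ! \<sigma> (i - 1)) \<le> snd (rs ! \<sigma> i)"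
    using exists_sorting_permutation_fixing_0[of "length rs" "\<lambda>i. snd (rs ! i)"] \<open>rs \<noteq> []\<close>
    by auto
  have "order_cost d rs \<sigma> = 0"
    unfolding order_cost_def
  proof (intro sum.neutral ballI)
    fix i assume i: "i \<in> {1..<length rs}"
    then have "fst (rs ! \<sigma> (i - 1)) = v" and "fst (rs ! \<sigma> i) = v"
      using permutes_consecutive_nodes[OF perm nodes] by auto
    then show "max (d (fst (rs ! \<sigma> (i - 1))) (fst (rs ! \<sigma> i)))
                   (snd (rs ! \<sigma> (i - 1)) - snd (rs ! \<sigma> i)) = 0"
      using assms(2) sorted i by auto
  qed
  moreover have "0 \<le> OPT d rs"
    using OPT_nonneg[of "{v}" d rs] nodes assms(2) by auto
  ultimately show ?thesis
    using OPT_le_order_cost[OF perm \<open>\<sigma> 0 = 0\<close>, of d] by simp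
qed

lemma max_le_add_max:
  fixes a b D :: real
  assumes "0 \<le> a" and "0 \<le> b"
  shows "max a D \<le> a + max b D"
  using assms by (simp add: max_def)

lemma order_cost_le_order_dist_add:
  assumes "\<forall>x\<in>V. \<forall>y\<in>V. 0 \<le> d x y" and "\<forall>x\<in>V. \<forall>y\<in>V. 0 \<le> d' x y"
    and "fst ` set rs \<subseteq> V" and "\<sigma> permutes {..<length rs}"
  shows "order_cost d rs \<sigma> \<le> order_dist d rs \<sigma> + order_cost d' rs \<sigma>"
  unfolding order_cost_def order_dist_def sum.distrib[symmetric]
  by (intro sum_mono max_le_add_max)
    (use assms(1,2) permutes_consecutive_nodes[OF assms(4,3)] in blast)+

lemma nn_integral_order_dist_le:
  fixes T :: "('a \<Rightarrow> 'a \<Rightarrow> real) pmf"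
  assumes T_nonneg: "\<forall>dT\<in>set_pmf T. \<forall>x\<in>V. \<forall>y\<in>V. 0 \<le> dT x y"
    and dG_nonneg: "\<forall>x\<in>V. \<forall>y\<in>V. 0 \<le> dG x y" and "0 \<le> K"
    and stretch: "\<forall>x\<in>V. \<forall>y\<in>V. (\<integral>\<^sup>+ dT. ennreal (dT x y) \<partial>measure_pmf T) \<le> ennreal (K * dG x y)"
    and nodes: "fst ` set rs \<subseteq> V" and perm: "\<sigma> permutes {..<length rs}"
  shows "(\<integral>\<^sup>+ dT. ennreal (order_dist dT rs \<sigma>) \<partial>measure_pmf T) \<le> ennreal (K * order_dist dG rs \<sigma>)"
proof -
  let ?I = "{1..<length rs}"
  define a where "a i = fst (rs ! \<sigma> (i - 1))" for i
  define b where "b i = fst (rs ! \<sigma> i)" for i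
  have ab: "a i \<in> V" "b i \<in> V" if "i \<in> ?I" for i
    using permutes_consecutive_nodes[OF perm nodes that] by (simp_all add: a_def b_def)
  have "(\<integral>\<^sup>+ dT. ennreal (order_dist dT rs \<sigma>) \<partial>measure_pmf T)
      = (\<integral>\<^sup>+ dT. (\<Sum>i\<in>?I. ennreal (dT (a i) (b i))) \<partial>measure_pmf T)"
    using T_nonneg ab unfolding order_dist_def a_def b_def
    by (intro nn_integral_cong_AE AE_pmfI, subst sum_ennreal) auto
  also have "\<dots> = (\<Sum>i\<in>?I. \<integral>\<^sup>+ dT. ennreal (dT (a i) (b i)) \<partial>measure_pmf T)"
    by (rule nn_integral_sum) simp
  also have "\<dots> \<le> (\<Sum>i\<in>?I. ennreal (K * dG (a i) (b i)))"
    using stretch ab by (intro sum_mono) simp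
  also have "\<dots> = ennreal (K * order_dist dG rs \<sigma>)"
    using dG_nonneg ab \<open>0 \<le> K\<close> unfolding order_dist_def a_def b_def sum_distrib_left
    by (subst sum_ennreal) (auto intro: mult_nonneg_nonneg)
  finally show ?thesis .
qed

lemma nn_integral_OPT_le:
  fixes T :: "('a \<Rightarrow> 'a \<Rightarrow> real) pmf"
  assumes T_nonneg: "\<forall>dT\<in>set_pmf T. \<forall>x\<in>V. \<forall>y\<in>V. 0 \<le> dT x y"
    and dG_nonneg: "\<forall>x\<in>V. \<forall>y\<in>V. 0 \<le> dG x y" and "0 \<le> K"
    and stretch: "\<forall>x\<in>V. \<forall>y\<in>V. (\<integral>\<^sup>+ dT. ennreal (dT x y) \<partial>measure_pmf T) \<le> ennreal (K * dG x y)"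
    and nodes: "fst ` set rs \<subseteq> V"
  shows "(\<integral>\<^sup>+ dT. ennreal (OPT dT rs) \<partial>measure_pmf T) \<le> ennreal ((K + 1) * OPT dG rs)"
proof -
  obtain \<sigma> where perm: "\<sigma> permutes {..<length rs}" and "\<sigma> 0 = 0"
    and opt: "OPT dG rs = order_cost dG rs \<sigma>"
    by (rule OPT_attained)
  have dist_G: "0 \<le> order_dist dG rs \<sigma>" "order_dist dG rs \<sigma> \<le> OPT dG rs"
    using order_dist_nonneg[OF dG_nonneg nodes perm] order_dist_le_order_cost opt by auto
  have "ennreal (OPT dT rs) \<le> ennreal (order_dist dT rs \<sigma>) + ennreal (OPT dG rs)"
    if "dT \<in> set_pmf T" for dT
  proof -
    have dT_nonneg: "\<forall>x\<in>V. \<forall>y\<in>V. 0 \<le> dT x y"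
      using T_nonneg that by blast
    have "OPT dT rs \<le> order_cost dT rs \<sigma>"
      by (rule OPT_le_order_cost[OF perm \<open>\<sigma> 0 = 0\<close>])
    also have "\<dots> \<le> order_dist dT rs \<sigma> + OPT dG rs"
      unfolding opt by (rule order_cost_le_order_dist_add[OF dT_nonneg dG_nonneg nodes perm])
    finally have "ennreal (OPT dT rs) \<le> ennreal (order_dist dT rs \<sigma> + OPT dG rs)"
      by (rule ennreal_leI)
    also have "\<dots> = ennreal (order_dist dT rs \<sigma>) + ennreal (OPT dG rs)"
      using order_dist_nonneg[OF dT_nonneg nodes perm] dist_G by (intro ennreal_plus) auto
    finally show ?thesis .
  qed
  then have "(\<integral>\<^sup>+ dT. ennreal (OPT dT rs) \<partial>measure_pmf T)
      \<le> (\<integral>\<^sup>+ dT. ennreal (order_dist dT rs \<sigma>) + ennreal (OPT dG rs) \<partial>measure_pmf T)"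
    by (intro nn_integral_mono_AE AE_pmfI)
  also have "\<dots> = (\<integral>\<^sup>+ dT. ennreal (order_dist dT rs \<sigma>) \<partial>measure_pmf T) + ennreal (OPT dG rs)"
    by (simp add: nn_integral_add measure_pmf.emeasure_space_1)
  also have "\<dots> \<le> ennreal (K * order_dist dG rs \<sigma>) + ennreal (OPT dG rs)"
    using nn_integral_order_dist_le[OF T_nonneg dG_nonneg \<open>0 \<le> K\<close> stretch nodes perm]
    by (rule add_right_mono)
  also have "\<dots> = ennreal (K * order_dist dG rs \<sigma> + OPT dG rs)"
    using dist_G \<open>0 \<le> K\<close> by (intro ennreal_plus[symmetric]) auto
  also have "\<dots> \<le> ennreal ((K + 1) * OPT dG rs)"
    using dist_G \<open>0 \<le> K\<close> by (intro ennreal_leI) (simp add: distrib_right mult_left_mono)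
  finally show ?thesis .
qed

lemma FRT_nn_integral_OPT_le:
  fixes T :: "('a \<Rightarrow> 'a \<Rightarrow> real) pmf"
  assumes "metric_on V dG" and "FRT_guarantee c V dG T" and "fst ` set rs \<subseteq> V" and "1 \<le> card V"
  shows "(\<integral>\<^sup>+ dT. ennreal (OPT dT rs) \<partial>measure_pmf T)
           \<le> ennreal ((max c 0 * ln (real (card V)) + 1) * OPT dG rs)"
proof (rule nn_integral_OPT_le)
  define L where "L = ln (real (card V))"
  have "0 \<le> L"
    using \<open>1 \<le> card V\<close> by (simp add: L_def)
  show dG_nonneg: "\<forall>x\<in>V. \<forall>y\<in>V. 0 \<le> dG x y"
    using \<open>metric_on V dG\<close> by (simp add: metric_on_def)
  have dominated: "\<forall>dT\<in>set_pmf T. \<forall>x\<in>V. \<forall>y\<in>V. dG x y \<le> dT x y"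
    and expected: "\<forall>x\<in>V. \<forall>y\<in>V. (\<integral>\<^sup>+ dT. ennreal (dT x y) \<partial>measure_pmf T) \<le> ennreal (c * L * dG x y)"
    using \<open>FRT_guarantee c V dG T\<close> unfolding FRT_guarantee_def L_def by blast+
  show "\<forall>dT\<in>set_pmf T. \<forall>x\<in>V. \<forall>y\<in>V. 0 \<le> dT x y"
    using dominated dG_nonneg by (meson order_trans)
  show "0 \<le> max c 0 * ln (real (card V))"
    using \<open>0 \<le> L\<close> by (simp add: L_def)
  show "\<forall>x\<in>V. \<forall>y\<in>V. (\<integral>\<^sup>+ dT. ennreal (dT x y) \<partial>measure_pmf T)
          \<le> ennreal (max c 0 * ln (real (card V)) * dG x y)"
  proof (intro ballI)
    fix x y assume "x \<in> V" "y \<in> V"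
    then have "(\<integral>\<^sup>+ dT. ennreal (dT x y) \<partial>measure_pmf T) \<le> ennreal (c * L * dG x y)"
      using expected by blast
    also have "\<dots> \<le> ennreal (max c 0 * L * dG x y)"
      using dG_nonneg \<open>x \<in> V\<close> \<open>y \<in> V\<close> \<open>0 \<le> L\<close>
      by (intro ennreal_leI mult_right_mono) auto
    finally show "(\<integral>\<^sup>+ dT. ennreal (dT x y) \<partial>measure_pmf T)
        \<le> ennreal (max c 0 * ln (real (card V)) * dG x y)"
      by (simp add: L_def)
  qed
qed (fact \<open>fst ` set rs \<subseteq> V\<close>)

lemma add_one_le_mult_ln:
  fixes k n :: real
  assumes "0 \<le> k" and "2 \<le> n"
  shows "k * ln n + 1 \<le> (k + 1 / ln 2) * ln n"
proof -
  have "ln 2 \<le> ln n"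
    using \<open>2 \<le> n\<close> by simp
  then have "1 \<le> ln n / ln 2"
    using ln_gt_zero[of "2::real"] by (simp add: le_divide_eq)
  then show ?thesis
    by (simp add: distrib_right)
qed

theorem lemma1:
  fixes c :: real
  shows "\<exists>C::real. \<forall>(V::'a set) dG (T::('a \<Rightarrow> 'a \<Rightarrow> real) pmf) rs.
           finite V \<and> V \<noteq> {} \<and> metric_on V dG \<and> FRT_guarantee c V dG T \<and> valid_requests V rs \<longrightarrow>
           (\<integral>\<^sup>+ dT. ennreal (OPT dT rs) \<partial>measure_pmf T)
             \<le> ennreal (C * ln (real (card V)) * OPT dG rs)"
proof (intro exI[of _ "max c 0 + 1 / ln 2"] allI impI, elim conjE)
  fix V :: "'a set" and dG and T :: "('a \<Rightarrow> 'a \<Rightarrow> real) pmf" and rs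
  assume V: "finite V" "V \<noteq> {}" and "metric_on V dG" "FRT_guarantee c V dG T" "valid_requests V rs"
  let ?L = "ln (real (card V))"
  have "1 \<le> card V"
    using V by (simp add: Suc_le_eq card_gt_0_iff)
  have nodes: "fst ` set rs \<subseteq> V"
    using \<open>valid_requests V rs\<close> by (auto simp: valid_requests_def)
  have "(max c 0 * ?L + 1) * OPT dG rs \<le> (max c 0 + 1 / ln 2) * ?L * OPT dG rs"
  proof (cases "card V = 1")
    case True
    then obtain v where "V = {v}"
      using card_1_singletonE by blast
    then have "OPT dG rs = 0"
      using \<open>valid_requests V rs\<close> \<open>metric_on V dG\<close>
      by (intro OPT_single_node) (auto simp: metric_on_def)
    then show ?thesis
      by simp
  next
    case False
    then show ?thesis
      using \<open>1 \<le> card V\<close> \<open>metric_on V dG\<close> OPT_nonneg[OF _ nodes, of dG]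
      by (intro mult_right_mono add_one_le_mult_ln) (auto simp: metric_on_def)
  qed
  then show "(\<integral>\<^sup>+ dT. ennreal (OPT dT rs) \<partial>measure_pmf T)
      \<le> ennreal ((max c 0 + 1 / ln 2) * ?L * OPT dG rs)"
    using FRT_nn_integral_OPT_le[OF \<open>metric_on V dG\<close> \<open>FRT_guarantee c V dG T\<close> nodes \<open>1 \<le> card V\<close>]
    by (meson ennreal_leI order_trans)
qed

end
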